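(* Let $G$ be a finite group, $\xi:G\to G$ an automorphism, $k>0$ an integer, and $\nu:G^k\to G^k$ the automorphism $\nu(g_0,\dots,g_{k-1})=(\xi(g_{k-1}),g_0,\dots,g_{k-2})$. Let $G^k$ act on $KG^k$ by $a\cdot b=ab\nu(a)^{-1}$ and $G$ act on $KG$ by $a\cdot b=ab\xi(a)^{-1}$ (for group elements $a,b$, extended linearly in $b$). Then the map $G^k\to G$, $(g_0,\dots,g_{k-1})\mapsto g_{k-1}\cdots g_0$, induces a linear isomorphism of coinvariant spaces $(KG^k)_{G^k}\to(KG)_G$.
   Context: $K$ is a field of characteristic $0$; $(KG)_G$ denotes the space of coinvariants $KG/\mathrm{span}\{a\cdot b-b\}$. *)

theory Defs
  imports "HOL-Algebra.Group"
begin

text \<open>The group algebra KG of a finite group G is modelled as the K-valued functions on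
  the carrier, vanishing outside the carrier (the coefficient of g is f g).\<close>

definition group_alg :: "'a set \<Rightarrow> ('a \<Rightarrow> 'k::field) set" where
  "group_alg S = {f. \<forall>x. x \<notin> S \<longrightarrow> f x = 0}"

definition basis_vec :: "'a \<Rightarrow> ('a \<Rightarrow> 'k::field)" where
  "basis_vec g = (\<lambda>x. if x = g then 1 else 0)"

definition lin_span :: "('a \<Rightarrow> 'k::field) set \<Rightarrow> ('a \<Rightarrow> 'k) set" where
  "lin_span S = {f. \<exists>F c. finite F \<and> F \<subseteq> S \<and> f = (\<lambda>x. \<Sum>v\<in>F. c v * v x)}"

definition coinv_rel :: "('a, 'm) monoid_scheme \<Rightarrow> ('a \<Rightarrow> 'a) \<Rightarrow> ('a \<Rightarrow> 'k::field) set" where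
  "coinv_rel H \<nu> = lin_span {(\<lambda>x. basis_vec (a \<otimes>\<^bsub>H\<^esub> b \<otimes>\<^bsub>H\<^esub> inv\<^bsub>H\<^esub> (\<nu> a)) x - basis_vec b x)
                            | a b. a \<in> carrier H \<and> b \<in> carrier H}"

definition pow_group :: "('a, 'm) monoid_scheme \<Rightarrow> nat \<Rightarrow> (nat \<Rightarrow> 'a) monoid" where
  "pow_group G k = \<lparr>carrier = (\<Pi>\<^sub>E i\<in>{..<k}. carrier G),
     mult = (\<lambda>g h. (\<lambda>i\<in>{..<k}. g i \<otimes>\<^bsub>G\<^esub> h i)),
     one = (\<lambda>i\<in>{..<k}. \<one>\<^bsub>G\<^esub>)\<rparr>"

definition shift_aut :: "('a \<Rightarrow> 'a) \<Rightarrow> nat \<Rightarrow> (nat \<Rightarrow> 'a) \<Rightarrow> (nat \<Rightarrow> 'a)" where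
  "shift_aut \<xi> k g = (\<lambda>i\<in>{..<k}. if i = 0 then \<xi> (g (k - 1)) else g (i - 1))"

fun rev_prod :: "('a, 'm) monoid_scheme \<Rightarrow> (nat \<Rightarrow> 'a) \<Rightarrow> nat \<Rightarrow> 'a" where
  "rev_prod G g 0 = \<one>\<^bsub>G\<^esub>"
| "rev_prod G g (Suc n) = g n \<otimes>\<^bsub>G\<^esub> rev_prod G g n"

definition push_lin :: "'a set \<Rightarrow> 'b set \<Rightarrow> ('a \<Rightarrow> 'b) \<Rightarrow> ('a \<Rightarrow> 'k::field) \<Rightarrow> ('b \<Rightarrow> 'k)" where
  "push_lin A B \<phi> f = (\<lambda>y. if y \<in> B then (\<Sum>x\<in>{x\<in>A. \<phi> x = y}. f x) else 0)"

text \<open>The linear map L: V1 -> V2 induces a linear isomorphism V1/R1 -> V2/R2: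
  it is well defined (L R1 \<subseteq> R2), injective (L x \<in> R2 implies x \<in> R1) and
  surjective (every y is congruent mod R2 to some L x).\<close>
definition induces_quot_iso ::
  "('a \<Rightarrow> 'k::field) set \<Rightarrow> ('a \<Rightarrow> 'k) set \<Rightarrow> ('b \<Rightarrow> 'k) set \<Rightarrow> ('b \<Rightarrow> 'k) set
     \<Rightarrow> (('a \<Rightarrow> 'k) \<Rightarrow> ('b \<Rightarrow> 'k)) \<Rightarrow> bool" where
  "induces_quot_iso V1 R1 V2 R2 L \<longleftrightarrow>
     (\<forall>x\<in>V1. x \<in> R1 \<longrightarrow> L x \<in> R2) \<and>
     (\<forall>x\<in>V1. L x \<in> R2 \<longrightarrow> x \<in> R1) \<and>
     (\<forall>y\<in>V2. \<exists>x\<in>V1. (\<lambda>t. L x t - y t) \<in> R2)"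

end

(*
  The product map pi(g) = g_{k-1} ... g_0 has the section sigma(c) = (1, ..., 1, c), and both
  maps respect the twisted-conjugation relations: pi(a.b) = a_{k-1}.pi(b), and
  sigma(g.c) = a.sigma(c) for a = (xi g, ..., xi g, g).  Moreover every b is twisted-conjugate
  to sigma(pi(b)).  So on coinvariants sigma_* inverts pi_*: pi_* sigma_* is already the
  identity on KG, and x - sigma_* pi_* x is a combination of relations.
*)
theory Submission
  imports Defs
begin

lemma lin_span_zero: "(\<lambda>x. 0) \<in> lin_span S"
  unfolding lin_span_def by (intro CollectI exI[of _ "{}"]) auto

lemma lin_span_base: "v \<in> S \<Longrightarrow> v \<in> lin_span S"
  unfolding lin_span_def by (intro CollectI exI[of _ "{v}"] exI[of _ "\<lambda>_. 1"]) auto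

lemma lin_span_scale: "f \<in> lin_span S \<Longrightarrow> (\<lambda>x. d * f x) \<in> lin_span S"
  unfolding lin_span_def
  by (auto simp: sum_distrib_left mult.assoc intro!: exI[of _ "\<lambda>v. d * _ v"])

lemma lin_span_add:
  assumes "f \<in> lin_span S" "g \<in> lin_span S"
  shows "(\<lambda>x. f x + g x) \<in> lin_span S"
proof -
  obtain F c G d where F: "finite F" "F \<subseteq> S" "f = (\<lambda>x. \<Sum>v\<in>F. c v * v x)"
    and G: "finite G" "G \<subseteq> S" "g = (\<lambda>x. \<Sum>v\<in>G. d v * v x)"
    using assms unfolding lin_span_def by blast
  define e where "e v = (if v \<in> F then c v else 0) + (if v \<in> G then d v else 0)" for v
  have "(\<Sum>v\<in>F \<union> G. e v * v x) = (\<Sum>v\<in>F. c v * v x) + (\<Sum>v\<in>G. d v * v x)" for x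
  proof -
    have "(\<Sum>v\<in>F \<union> G. e v * v x)
        = (\<Sum>v\<in>F \<union> G. if v \<in> F then c v * v x else 0) + (\<Sum>v\<in>F \<union> G. if v \<in> G then d v * v x else 0)"
      unfolding e_def sum.distrib[symmetric] by (rule sum.cong) (auto simp: distrib_right)
    also have "\<dots> = (\<Sum>v\<in>F. c v * v x) + (\<Sum>v\<in>G. d v * v x)"
      using F(1) G(1) by (simp add: sum.If_cases Int_absorb1 Int_absorb2)
    finally show ?thesis .
  qed
  then show ?thesis
    unfolding lin_span_def by (intro CollectI exI[of _ "F \<union> G"] exI[of _ e]) (simp add: F G)
qed

lemma lin_span_sum:
  assumes "finite I" "\<And>i. i \<in> I \<Longrightarrow> f i \<in> lin_span S"
  shows "(\<lambda>x. \<Sum>i\<in>I. d i * f i x) \<in> lin_span S"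
  using assms
proof (induction I rule: finite_induct)
  case empty
  then show ?case by (simp add: lin_span_zero)
next
  case (insert i I)
  then have "(\<lambda>x. d i * f i x + (\<Sum>i\<in>I. d i * f i x)) \<in> lin_span S"
    by (intro lin_span_add lin_span_scale) auto
  then show ?case
    using insert by simp
qed

lemma push_lin_lincomb:
  "push_lin A B \<phi> (\<lambda>x. \<Sum>v\<in>F. c v * v x) = (\<lambda>y. \<Sum>v\<in>F. c v * push_lin A B \<phi> v y)"
  unfolding push_lin_def by (rule ext) (auto simp: sum_distrib_left intro: sum.swap)

lemma push_lin_lin_span:
  assumes "\<And>v. v \<in> S \<Longrightarrow> push_lin A B \<phi> v \<in> lin_span T" and "f \<in> lin_span S"
  shows "push_lin A B \<phi> f \<in> lin_span T"
proof -
  obtain F c where F: "finite F" "F \<subseteq> S" "f = (\<lambda>x. \<Sum>v\<in>F. c v * v x)"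
    using assms(2) unfolding lin_span_def by blast
  show ?thesis
    unfolding F(3) push_lin_lincomb by (rule lin_span_sum) (use F assms(1) in auto)
qed

lemma push_lin_in_group_alg: "push_lin A B \<phi> f \<in> group_alg B"
  by (simp add: push_lin_def group_alg_def)

lemma push_lin_eq_sum:
  assumes "finite A" "\<phi> ` A \<subseteq> B"
  shows "push_lin A B \<phi> f = (\<lambda>y. \<Sum>x\<in>A. f x * (basis_vec (\<phi> x) y :: 'k::field))"
proof
  fix y
  have "(\<Sum>x\<in>A. f x * (basis_vec (\<phi> x) y :: 'k)) = (\<Sum>x\<in>A. if \<phi> x = y then f x else 0)"
    by (rule sum.cong) (auto simp: basis_vec_def)
  also have "\<dots> = (if y \<in> B then \<Sum>x\<in>{x\<in>A. \<phi> x = y}. f x else 0)"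
    using assms by (cases "y \<in> B") (auto simp: sum.inter_filter intro!: sum.neutral)
  finally show "push_lin A B \<phi> f y = (\<Sum>x\<in>A. f x * basis_vec (\<phi> x) y)"
    by (simp add: push_lin_def)
qed

lemma group_alg_eq_sum:
  assumes "finite A" "f \<in> group_alg A"
  shows "f y = (\<Sum>x\<in>A. f x * (basis_vec x y :: 'k::field))"
  using assms by (auto simp: basis_vec_def group_alg_def if_distrib cong: if_cong)

lemma push_lin_basis_diff:
  assumes "finite A" "p \<in> A" "q \<in> A" "\<phi> ` A \<subseteq> B"
  shows "push_lin A B \<phi> (\<lambda>x. basis_vec p x - basis_vec q x)
       = (\<lambda>y. basis_vec (\<phi> p) y - (basis_vec (\<phi> q) y :: 'k::field))"
proof -
  have "(\<Sum>x\<in>A. basis_vec r x * (basis_vec (\<phi> x) y :: 'k)) = basis_vec (\<phi> r) y"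
    if "r \<in> A" for r y
  proof -
    have "(\<Sum>x\<in>A. basis_vec r x * (basis_vec (\<phi> x) y :: 'k))
        = (\<Sum>x\<in>A. if x = r then basis_vec (\<phi> x) y else 0)"
      by (rule sum.cong) (auto simp: basis_vec_def)
    then show ?thesis
      using assms(1) that by simp
  qed
  then show ?thesis
    using assms by (simp add: push_lin_eq_sum left_diff_distrib sum_subtractf)
qed

lemma push_lin_comp:
  assumes "finite A" "finite B" "\<phi> ` A \<subseteq> B"
  shows "push_lin B C \<psi> (push_lin A B \<phi> f) = push_lin A C (\<psi> \<circ> \<phi>) f"
proof
  fix z
  have "(\<Sum>y\<in>{y\<in>B. \<psi> y = z}. \<Sum>x\<in>{x\<in>A. \<phi> x = y}. f x)
      = (\<Sum>y\<in>{y\<in>B. \<psi> y = z}. \<Sum>x\<in>{x\<in>{x\<in>A. \<psi> (\<phi> x) = z}. \<phi> x = y}. f x)"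
    by (intro sum.cong refl arg_cong[where f = "sum f"]) auto
  also have "\<dots> = (\<Sum>x\<in>{x\<in>A. \<psi> (\<phi> x) = z}. f x)"
    by (rule sum.group) (use assms in auto)
  finally show "push_lin B C \<psi> (push_lin A B \<phi> f) z = push_lin A C (\<psi> \<circ> \<phi>) f z"
    by (simp add: push_lin_def)
qed

lemma push_lin_id_on:
  assumes "\<And>x. x \<in> A \<Longrightarrow> \<phi> x = x" "f \<in> group_alg A"
  shows "push_lin A A \<phi> f = f"
proof
  fix y
  have "y \<in> A \<Longrightarrow> {x\<in>A. \<phi> x = y} = {y}"
    using assms(1) by auto
  then show "push_lin A A \<phi> f y = f y"
    using assms(2) by (simp add: push_lin_def group_alg_def)
qed

definition diff_span :: "('a \<times> 'a) set \<Rightarrow> ('a \<Rightarrow> 'k::field) set" where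
  "diff_span P = lin_span {(\<lambda>x. basis_vec p x - basis_vec q x) | p q. (p, q) \<in> P}"

lemma diff_span_base: "(p, q) \<in> P \<Longrightarrow> (\<lambda>x. basis_vec p x - basis_vec q x) \<in> diff_span P"
  unfolding diff_span_def by (rule lin_span_base) blast

lemma push_lin_diff_span:
  assumes "finite A" "P \<subseteq> A \<times> A" "\<phi> ` A \<subseteq> B"
    and "\<And>p q. (p, q) \<in> P \<Longrightarrow> (\<phi> p, \<phi> q) \<in> Q"
    and "f \<in> diff_span P"
  shows "push_lin A B \<phi> f \<in> diff_span Q"
  using assms(5) unfolding diff_span_def
proof (rule push_lin_lin_span[rotated])
  fix v
  assume "v \<in> {(\<lambda>x. basis_vec p x - basis_vec q x) | p q. (p, q) \<in> P}"
  then obtain p q where pq: "(p, q) \<in> P" and v: "v = (\<lambda>x. basis_vec p x - basis_vec q x)"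
    by blast
  then have "p \<in> A" "q \<in> A"
    using assms(2) by auto
  then show "push_lin A B \<phi> v \<in> lin_span {(\<lambda>x. basis_vec p x - basis_vec q x) | p q. (p, q) \<in> Q}"
    using diff_span_base[OF assms(4)[OF pq], unfolded diff_span_def]
    by (simp add: v push_lin_basis_diff assms(1,3))
qed

lemma induces_quot_iso_retraction:
  fixes \<pi> :: "'a \<Rightarrow> 'b" and \<sigma> :: "'b \<Rightarrow> 'a"
  assumes A: "finite A" and \<pi>: "\<pi> ` A \<subseteq> B" and \<sigma>: "\<sigma> ` B \<subseteq> A"
    and retr: "\<And>y. y \<in> B \<Longrightarrow> \<pi> (\<sigma> y) = y"
    and P: "P \<subseteq> A \<times> A" and Q: "Q \<subseteq> B \<times> B"
    and \<pi>_rel: "\<And>p q. (p, q) \<in> P \<Longrightarrow> (\<pi> p, \<pi> q) \<in> Q"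
    and \<sigma>_rel: "\<And>p q. (p, q) \<in> Q \<Longrightarrow> (\<sigma> p, \<sigma> q) \<in> P"
    and rel_retr: "\<And>x. x \<in> A \<Longrightarrow> (\<sigma> (\<pi> x), x) \<in> P"
  shows "induces_quot_iso (group_alg A) (diff_span P :: ('a \<Rightarrow> 'k::field) set)
           (group_alg B) (diff_span Q) (push_lin A B \<pi>)"
proof -
  have "B \<subseteq> \<pi> ` A"
    using retr \<sigma> by (metis image_eqI image_subset_iff subsetI)
  then have B: "finite B"
    using A by (rule finite_subset[OF _ finite_imageI])
  have \<sigma>\<pi>: "(\<sigma> \<circ> \<pi>) ` A \<subseteq> A"
    using \<pi> \<sigma> by auto
  have reflect: "f \<in> diff_span P"
    if f: "f \<in> group_alg A" and "push_lin A B \<pi> f \<in> diff_span Q" for f :: "'a \<Rightarrow> 'k"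
  proof -
    have "push_lin A A (\<sigma> \<circ> \<pi>) f = push_lin B A \<sigma> (push_lin A B \<pi> f)"
      by (rule push_lin_comp[symmetric, OF A B \<pi>])
    then have retracted: "push_lin A A (\<sigma> \<circ> \<pi>) f \<in> diff_span P"
      using push_lin_diff_span[OF B Q \<sigma> \<sigma>_rel that(2)] by simp
    have moves: "(\<lambda>y. \<Sum>x\<in>A. (- f x) * (basis_vec (\<sigma> (\<pi> x)) y - basis_vec x y)) \<in> diff_span P"
      unfolding diff_span_def
      using diff_span_base[OF rel_retr, unfolded diff_span_def] by (rule lin_span_sum[OF A])
    have "f y = push_lin A A (\<sigma> \<circ> \<pi>) f y
                 + (\<Sum>x\<in>A. (- f x) * (basis_vec (\<sigma> (\<pi> x)) y - basis_vec x y))" for y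
    proof -
      have "(\<Sum>x\<in>A. (- f x) * (basis_vec (\<sigma> (\<pi> x)) y - basis_vec x y))
          = (\<Sum>x\<in>A. f x * basis_vec x y) - (\<Sum>x\<in>A. f x * basis_vec (\<sigma> (\<pi> x)) y)"
        by (simp add: sum_subtractf[symmetric] algebra_simps)
      then show ?thesis
        unfolding group_alg_eq_sum[OF A f, of y] by (simp add: push_lin_eq_sum[OF A \<sigma>\<pi>])
    qed
    then have decomposition: "f = (\<lambda>y. push_lin A A (\<sigma> \<circ> \<pi>) f y
                 + (\<Sum>x\<in>A. (- f x) * (basis_vec (\<sigma> (\<pi> x)) y - basis_vec x y)))" ..
    show ?thesis
      using retracted moves unfolding diff_span_def
      by (subst decomposition) (rule lin_span_add)
  qed
  have lift: "push_lin A B \<pi> (push_lin B A \<sigma> g) = g" if "g \<in> group_alg B" for g :: "'b \<Rightarrow> 'k"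
    using that retr by (simp add: push_lin_comp[OF B A \<sigma>] push_lin_id_on)
  show ?thesis
    unfolding induces_quot_iso_def
  proof (intro conjI ballI impI)
    fix f :: "'a \<Rightarrow> 'k"
    assume "f \<in> diff_span P"
    then show "push_lin A B \<pi> f \<in> diff_span Q"
      using push_lin_diff_span[OF A P \<pi> \<pi>_rel] by blast
  next
    fix f :: "'a \<Rightarrow> 'k"
    assume "f \<in> group_alg A" "push_lin A B \<pi> f \<in> diff_span Q"
    then show "f \<in> diff_span P"
      by (rule reflect)
  next
    fix g :: "'b \<Rightarrow> 'k"
    assume "g \<in> group_alg B"
    then show "\<exists>f\<in>group_alg A. (\<lambda>y. push_lin A B \<pi> f y - g y) \<in> diff_span Q"
      by (intro bexI[of _ "push_lin B A \<sigma> g"])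
        (simp_all add: lift diff_span_def lin_span_zero push_lin_in_group_alg)
  qed
qed

definition twisted_conj :: "('a, 'm) monoid_scheme \<Rightarrow> ('a \<Rightarrow> 'a) \<Rightarrow> 'a \<Rightarrow> 'a \<Rightarrow> 'a" where
  "twisted_conj H \<nu> a b = a \<otimes>\<^bsub>H\<^esub> b \<otimes>\<^bsub>H\<^esub> inv\<^bsub>H\<^esub> (\<nu> a)"

definition twisted_conj_rel :: "('a, 'm) monoid_scheme \<Rightarrow> ('a \<Rightarrow> 'a) \<Rightarrow> ('a \<times> 'a) set" where
  "twisted_conj_rel H \<nu> = {(twisted_conj H \<nu> a b, b) | a b. a \<in> carrier H \<and> b \<in> carrier H}"

lemma twisted_conj_relI:
  "a \<in> carrier H \<Longrightarrow> b \<in> carrier H \<Longrightarrow> (twisted_conj H \<nu> a b, b) \<in> twisted_conj_rel H \<nu>"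
  unfolding twisted_conj_rel_def by blast

lemma twisted_conj_relE:
  assumes "(p, q) \<in> twisted_conj_rel H \<nu>"
  obtains a where "a \<in> carrier H" "q \<in> carrier H" "p = twisted_conj H \<nu> a q"
  using assms unfolding twisted_conj_rel_def by blast

lemma coinv_rel_eq_diff_span: "coinv_rel H \<nu> = diff_span (twisted_conj_rel H \<nu>)"
  unfolding coinv_rel_def diff_span_def twisted_conj_rel_def twisted_conj_def
  by (rule arg_cong[where f = lin_span]) blast

lemma (in group) twisted_conj_closed:
  "\<nu> \<in> carrier G \<rightarrow> carrier G \<Longrightarrow> a \<in> carrier G \<Longrightarrow> b \<in> carrier G \<Longrightarrow> twisted_conj G \<nu> a b \<in> carrier G"
  unfolding twisted_conj_def by (intro m_closed inv_closed funcset_mem[of \<nu>])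

lemma (in group) twisted_conj_rel_subset:
  "\<nu> \<in> carrier G \<rightarrow> carrier G \<Longrightarrow> twisted_conj_rel G \<nu> \<subseteq> carrier G \<times> carrier G"
  by (auto elim: twisted_conj_relE intro: twisted_conj_closed)

lemma pow_group_carrier: "carrier (pow_group G k) = (\<Pi>\<^sub>E i\<in>{..<k}. carrier G)"
  by (simp add: pow_group_def)

lemma pow_group_carrier_nth: "a \<in> carrier (pow_group G k) \<Longrightarrow> i < k \<Longrightarrow> a i \<in> carrier G"
  by (auto simp: pow_group_carrier)

lemma pow_group_mult: "x \<otimes>\<^bsub>pow_group G k\<^esub> y = (\<lambda>i\<in>{..<k}. x i \<otimes>\<^bsub>G\<^esub> y i)"
  by (simp add: pow_group_def)

lemma pow_group_one: "\<one>\<^bsub>pow_group G k\<^esub> = (\<lambda>i\<in>{..<k}. \<one>\<^bsub>G\<^esub>)"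
  by (simp add: pow_group_def)

lemma (in group) group_pow_group: "group (pow_group G k)"
proof (rule groupI)
  fix x y z
  assume "x \<in> carrier (pow_group G k)" "y \<in> carrier (pow_group G k)" "z \<in> carrier (pow_group G k)"
  then show "x \<otimes>\<^bsub>pow_group G k\<^esub> y \<otimes>\<^bsub>pow_group G k\<^esub> z
           = x \<otimes>\<^bsub>pow_group G k\<^esub> (y \<otimes>\<^bsub>pow_group G k\<^esub> z)"
    by (auto simp: pow_group_carrier pow_group_mult m_assoc PiE_iff)
next
  fix x y
  assume "x \<in> carrier (pow_group G k)" "y \<in> carrier (pow_group G k)"
  then show "x \<otimes>\<^bsub>pow_group G k\<^esub> y \<in> carrier (pow_group G k)"
    by (auto simp: pow_group_carrier pow_group_mult PiE_iff)
next
  show "\<one>\<^bsub>pow_group G k\<^esub> \<in> carrier (pow_group G k)"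
    by (auto simp: pow_group_carrier pow_group_one)
next
  fix x
  assume x: "x \<in> carrier (pow_group G k)"
  then show "\<one>\<^bsub>pow_group G k\<^esub> \<otimes>\<^bsub>pow_group G k\<^esub> x = x"
    by (auto simp: pow_group_carrier pow_group_mult pow_group_one PiE_iff extensional_def)
  show "\<exists>y\<in>carrier (pow_group G k). y \<otimes>\<^bsub>pow_group G k\<^esub> x = \<one>\<^bsub>pow_group G k\<^esub>"
    using x by (intro bexI[of _ "\<lambda>i\<in>{..<k}. inv (x i)"])
      (auto simp: pow_group_carrier pow_group_mult pow_group_one PiE_iff)
qed

lemma (in group) pow_group_inv:
  assumes "a \<in> carrier (pow_group G k)"
  shows "inv\<^bsub>pow_group G k\<^esub> a = (\<lambda>i\<in>{..<k}. inv (a i))"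
proof -
  interpret P: group "pow_group G k"
    by (rule group_pow_group)
  show ?thesis
    using assms
    by (intro P.inv_equality) (auto simp: pow_group_carrier pow_group_mult pow_group_one PiE_iff)
qed

lemma shift_aut_closed:
  assumes "\<xi> \<in> carrier G \<rightarrow> carrier G"
  shows "shift_aut \<xi> k \<in> carrier (pow_group G k) \<rightarrow> carrier (pow_group G k)"
proof
  fix a
  assume a: "a \<in> carrier (pow_group G k)"
  then have "a i \<in> carrier G" if "i < k" for i
    using that by (rule pow_group_carrier_nth)
  then show "shift_aut \<xi> k a \<in> carrier (pow_group G k)"
    using assms by (auto simp: pow_group_carrier shift_aut_def Pi_iff)
qed

lemma (in group) twisted_conj_shift_aut_nth:
  assumes "\<xi> \<in> carrier G \<rightarrow> carrier G" "a \<in> carrier (pow_group G k)" "b \<in> carrier (pow_group G k)"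
    and "i < k"
  shows "twisted_conj (pow_group G k) (shift_aut \<xi> k) a b i
       = a i \<otimes> b i \<otimes> inv (if i = 0 then \<xi> (a (k - 1)) else a (i - 1))"
proof -
  have "shift_aut \<xi> k a \<in> carrier (pow_group G k)"
    using shift_aut_closed[OF assms(1)] assms(2) by (rule funcset_mem)
  then show ?thesis
    using assms(4) by (simp add: twisted_conj_def pow_group_mult pow_group_inv shift_aut_def)
qed

lemma (in group) rev_prod_closed:
  "b \<in> carrier (pow_group G k) \<Longrightarrow> n \<le> k \<Longrightarrow> rev_prod G b n \<in> carrier G"
  by (induction n) (auto simp: pow_group_carrier PiE_iff)

lemma (in group) rev_prod_twisted_conj:
  assumes \<xi>: "\<xi> \<in> carrier G \<rightarrow> carrier G"
    and a: "a \<in> carrier (pow_group G k)" and b: "b \<in> carrier (pow_group G k)" and "k > 0"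
  shows "rev_prod G (twisted_conj (pow_group G k) (shift_aut \<xi> k) a b) k
       = twisted_conj G \<xi> (a (k - 1)) (rev_prod G b k)"
proof -
  let ?c = "twisted_conj (pow_group G k) (shift_aut \<xi> k) a b"
  have ai: "a i \<in> carrier G" and bi: "b i \<in> carrier G" if "i < k" for i
    using a b that by (simp_all add: pow_group_carrier_nth)
  have \<xi>a: "\<xi> (a (k - 1)) \<in> carrier G"
    using \<xi> ai \<open>k > 0\<close> by (simp add: funcset_mem)
  have cancel: "inv x \<otimes> (x \<otimes> y) = y" if "x \<in> carrier G" "y \<in> carrier G" for x y
    using that by (simp add: m_assoc[symmetric])
  have "Suc n \<le> k \<Longrightarrow> rev_prod G ?c (Suc n) = a n \<otimes> rev_prod G b (Suc n) \<otimes> inv (\<xi> (a (k - 1)))"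
    for n
  proof (induction n)
    case 0
    then show ?case
      using twisted_conj_shift_aut_nth[OF \<xi> a b, of 0] ai bi \<xi>a by (simp add: m_assoc)
  next
    case (Suc n)
    have "rev_prod G ?c (Suc (Suc n))
        = (a (Suc n) \<otimes> b (Suc n) \<otimes> inv (a n)) \<otimes> (a n \<otimes> rev_prod G b (Suc n) \<otimes> inv (\<xi> (a (k - 1))))"
      using Suc twisted_conj_shift_aut_nth[OF \<xi> a b, of "Suc n"] by simp
    also have "\<dots> = a (Suc n) \<otimes> rev_prod G b (Suc (Suc n)) \<otimes> inv (\<xi> (a (k - 1)))"
      using Suc.prems ai bi \<xi>a rev_prod_closed[OF b, of "Suc n"] by (simp add: m_assoc cancel)
    finally show ?case .
  qed
  from this[of "k - 1"] show ?thesis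
    using \<open>k > 0\<close> by (simp add: twisted_conj_def)
qed

lemma (in group) twisted_conj_rel_rev_prod:
  assumes \<xi>: "\<xi> \<in> carrier G \<rightarrow> carrier G" and "k > 0"
    and "(p, q) \<in> twisted_conj_rel (pow_group G k) (shift_aut \<xi> k)"
  shows "(rev_prod G p k, rev_prod G q k) \<in> twisted_conj_rel G \<xi>"
proof -
  obtain a where a: "a \<in> carrier (pow_group G k)" and q: "q \<in> carrier (pow_group G k)"
    and p: "p = twisted_conj (pow_group G k) (shift_aut \<xi> k) a q"
    using assms(3) by (rule twisted_conj_relE)
  have "a (k - 1) \<in> carrier G"
    using a \<open>k > 0\<close> by (simp add: pow_group_carrier_nth)
  then show ?thesis
    unfolding p rev_prod_twisted_conj[OF \<xi> a q \<open>k > 0\<close>]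
    by (rule twisted_conj_relI) (rule rev_prod_closed[OF q order_refl])
qed

definition embed_last :: "('a, 'm) monoid_scheme \<Rightarrow> nat \<Rightarrow> 'a \<Rightarrow> nat \<Rightarrow> 'a" where
  "embed_last G k c = (\<lambda>i\<in>{..<k}. if i = k - 1 then c else \<one>\<^bsub>G\<^esub>)"

lemma (in group) embed_last_closed: "c \<in> carrier G \<Longrightarrow> embed_last G k c \<in> carrier (pow_group G k)"
  by (auto simp: embed_last_def pow_group_carrier)

lemma (in group) rev_prod_embed_last:
  assumes "k > 0" "c \<in> carrier G"
  shows "rev_prod G (embed_last G k c) k = c"
proof -
  have ones: "n < k \<Longrightarrow> rev_prod G (embed_last G k c) n = \<one>" for n
    by (induction n) (auto simp: embed_last_def)
  obtain m where "k = Suc m"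
    using assms(1) gr0_implies_Suc by blast
  then show ?thesis
    using ones[of m] assms(2) by (simp add: embed_last_def)
qed

lemma (in group) twisted_conj_rel_embed_last:
  assumes \<xi>: "\<xi> \<in> carrier G \<rightarrow> carrier G" and "(p, c) \<in> twisted_conj_rel G \<xi>"
  shows "(embed_last G k p, embed_last G k c) \<in> twisted_conj_rel (pow_group G k) (shift_aut \<xi> k)"
proof -
  obtain g where g: "g \<in> carrier G" and c: "c \<in> carrier G" and p: "p = twisted_conj G \<xi> g c"
    using assms(2) by (rule twisted_conj_relE)
  define a where "a = (\<lambda>i\<in>{..<k}. if i = k - 1 then g else \<xi> g)"
  have \<xi>g: "\<xi> g \<in> carrier G"
    using \<xi> g by (rule funcset_mem)
  have a_closed: "a \<in> carrier (pow_group G k)"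
    using g \<xi>g by (auto simp: a_def pow_group_carrier)
  have "twisted_conj (pow_group G k) (shift_aut \<xi> k) a (embed_last G k c) i = embed_last G k p i"
    if i: "i < k" for i
  proof -
    have "(if i = 0 then \<xi> (a (k - 1)) else a (i - 1)) = \<xi> g"
      using i by (auto simp: a_def)
    then have "twisted_conj (pow_group G k) (shift_aut \<xi> k) a (embed_last G k c) i
        = a i \<otimes> embed_last G k c i \<otimes> inv (\<xi> g)"
      by (simp add: twisted_conj_shift_aut_nth[OF \<xi> a_closed embed_last_closed[OF c] i])
    also have "\<dots> = embed_last G k p i"
      using i g c \<xi>g by (simp add: p a_def embed_last_def twisted_conj_def)
    finally show ?thesis .
  qed
  then have "twisted_conj (pow_group G k) (shift_aut \<xi> k) a (embed_last G k c) = embed_last G k p"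
    using group.twisted_conj_closed[OF group_pow_group shift_aut_closed[OF \<xi>] a_closed
          embed_last_closed[OF c]]
      embed_last_closed[OF twisted_conj_closed[OF \<xi> g c]]
    by (intro PiE_ext[where s = "\<lambda>_. carrier G"]) (auto simp: p pow_group_carrier)
  then show ?thesis
    using twisted_conj_relI[OF a_closed embed_last_closed[OF c], of "shift_aut \<xi> k"] by simp
qed

lemma (in group) twisted_conj_rel_embed_last_rev_prod:
  assumes \<xi>: "\<xi> \<in> hom G G" and b: "b \<in> carrier (pow_group G k)"
  shows "(embed_last G k (rev_prod G b k), b) \<in> twisted_conj_rel (pow_group G k) (shift_aut \<xi> k)"
proof -
  \<comment> \<open>With this choice the twisted conjugate telescopes: its i-th entry is a_i b_i ... b_0.\<close>
  define a where "a = (\<lambda>i\<in>{..<k}. if i = k - 1 then \<one> else inv (rev_prod G b (Suc i)))"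
  have \<xi>_closed: "\<xi> \<in> carrier G \<rightarrow> carrier G"
    using \<xi> by (simp add: hom_def)
  have prods: "rev_prod G b n \<in> carrier G" if "n \<le> k" for n
    using b that by (rule rev_prod_closed)
  have a_closed: "a \<in> carrier (pow_group G k)"
    using prods by (auto simp: a_def pow_group_carrier simp del: rev_prod.simps)
  have "twisted_conj (pow_group G k) (shift_aut \<xi> k) a b i = embed_last G k (rev_prod G b k) i"
    if i: "i < k" for i
  proof -
    have bi: "b i \<in> carrier G"
      using b i by (rule pow_group_carrier_nth)
    have "inv (if i = 0 then \<xi> (a (k - 1)) else a (i - 1)) = rev_prod G b i"
      using i hom_one[OF \<xi> is_group is_group] prods[of i]
      by (auto simp: a_def simp del: rev_prod.simps(2))
    then have "twisted_conj (pow_group G k) (shift_aut \<xi> k) a b i = a i \<otimes> rev_prod G b (Suc i)"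
      using i bi prods[of i] a_closed
      by (simp add: twisted_conj_shift_aut_nth[OF \<xi>_closed a_closed b i] m_assoc pow_group_carrier
          PiE_iff)
    also have "\<dots> = embed_last G k (rev_prod G b k) i"
      using i prods[of "Suc i"] by (auto simp: a_def embed_last_def simp del: rev_prod.simps)
    finally show ?thesis .
  qed
  then have "twisted_conj (pow_group G k) (shift_aut \<xi> k) a b = embed_last G k (rev_prod G b k)"
    using group.twisted_conj_closed[OF group_pow_group shift_aut_closed[OF \<xi>_closed] a_closed b]
      embed_last_closed[OF prods[of k]]
    by (intro PiE_ext[where s = "\<lambda>_. carrier G"]) (auto simp: pow_group_carrier)
  then show ?thesis
    using twisted_conj_relI[OF a_closed b, of "shift_aut \<xi> k"] by simp
qed

theorem lemma6p4:
  fixes G :: "'g monoid" and \<xi> :: "'g \<Rightarrow> 'g" and k :: nat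
  assumes "group G" and "finite (carrier G)"
    and "\<xi> \<in> iso G G"
    and "k > 0"
  shows "induces_quot_iso
           (group_alg (carrier (pow_group G k)) :: ((nat \<Rightarrow> 'g) \<Rightarrow> 'k::field_char_0) set)
           (coinv_rel (pow_group G k) (shift_aut \<xi> k))
           (group_alg (carrier G))
           (coinv_rel G \<xi>)
           (push_lin (carrier (pow_group G k)) (carrier G) (\<lambda>g. rev_prod G g k))"
proof -
  interpret group G by fact
  have \<xi>: "\<xi> \<in> hom G G"
    using assms(3) by (simp add: iso_def)
  then have \<xi>_closed: "\<xi> \<in> carrier G \<rightarrow> carrier G"
    by (simp add: hom_def)
  show ?thesis
    unfolding coinv_rel_eq_diff_span
  proof (rule induces_quot_iso_retraction[where \<sigma> = "embed_last G k"], goal_cases)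
    case 1
    show ?case using assms(2) by (simp add: pow_group_carrier finite_PiE)
  next
    case 2
    show ?case using rev_prod_closed by auto
  next
    case 3
    show ?case using embed_last_closed by auto
  next
    case 4
    then show ?case by (rule rev_prod_embed_last[OF assms(4)])
  next
    case 5
    show ?case by (rule group.twisted_conj_rel_subset[OF group_pow_group shift_aut_closed[OF \<xi>_closed]])
  next
    case 6
    show ?case by (rule twisted_conj_rel_subset[OF \<xi>_closed])
  next
    case 7
    then show ?case by (rule twisted_conj_rel_rev_prod[OF \<xi>_closed assms(4)])
  next
    case 8
    then show ?case by (rule twisted_conj_rel_embed_last[OF \<xi>_closed])
  next
    case 9
    then show ?case by (rule twisted_conj_rel_embed_last_rev_prod[OF \<xi>])
  qed
qed

end
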